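(* Let $x$ be large, $B>0$, $z\in\mathbb C$ with $|z|\le B\log x/(\log_2x\log_3x)$, and $s\in\mathbb C$ with $\Re(s)>1/2$. Then \[\sum_{m=1}^\infty\frac{d_z(m)}{m}h_m(s)=\prod_p\Bigl(a_p(s)\bigl(1-\tfrac1p\bigr)^{-z}+b_p(s)\bigl(1+\tfrac1p\bigr)^{-z}+c_p(s)\Bigr),\] and both sides are analytic functions of $s$ in the half-plane $\Re(s)>1/2$.
   Context: $d_z$ is the multiplicative function with $d_z(p^\nu)=\Gamma(z+\nu)/(\Gamma(z)\nu!)$. For odd primes $p$: $a_p(s)=\frac{p-3}{2p}+\frac{2}{p(p^s+1)}$, $b_p(s)=\frac{p-1}{2p}$, $c_p(s)=1-a_p(s)-b_p(s)$; for $p=2$: $a_2(s)=\frac1{8^s+2^s+2}$, $b_2(s)=\frac12\frac{8^s-4^s+2}{8^s+2^s+2}$, $c_2(s)=\frac{2^{s-1}(4^s+2^s+2)}{8^s+2^s+2}$. Write $m=2^{e_1}p_2^{e_2}\cdots p_r^{e_r}$ ($e_1\ge0$, $p_j$ distinct odd primes, $e_j\ge1$), $m_0$ the squarefree part of $m/2^{e_1}$, $\omega(m_0)$ its number of prime factors, and \[h_m(s)=\frac{(-1)^{\omega(m_0)}}{m_0}\,\frac{\prod_{2\le j\le r,\ e_j\text{ even}}\bigl(1-\frac2{p_j}\bigr)\bigl(1+\frac{2(p_j-1)}{(p_j-2)(p_j^s-1)}\bigr)}{\prod_{p\mid m}\bigl(1+\frac2{p^s-1}\bigr)}\,\tilde\kappa(m,s),\]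 with $\tilde\kappa(m,s)=1$ if $m$ is odd and $\tilde\kappa(m,s)=\frac{(-1)^{e_1}}2\frac{8^s+4^s}{8^s+2^s+2}\bigl(1+\frac{2(1+(-1)^{e_1})}{4^s(2^s-1)}\bigr)$ if $m$ is even. *)

theory Defs
  imports "HOL-Analysis.Analysis" "HOL-Computational_Algebra.Primes"
begin

definition npow :: "nat \<Rightarrow> complex \<Rightarrow> complex" where
  "npow n s = (of_nat n :: complex) powr s"

text \<open>Generalised divisor function d_z; Gamma(z+nu)/(Gamma(z) nu!) is written as the
  rising factorial (z)_nu / nu!, its analytic continuation to all z.\<close>
definition dz :: "complex \<Rightarrow> nat \<Rightarrow> complex" where
  "dz z m = (\<Prod>p\<in>prime_factors m.
      pochhammer z (multiplicity p m) / fact (multiplicity p m))"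

definition ap :: "nat \<Rightarrow> complex \<Rightarrow> complex" where
  "ap p s = (if p = 2 then 1 / (npow 8 s + npow 2 s + 2)
     else (of_nat p - 3) / (2 * of_nat p) + 2 / (of_nat p * (npow p s + 1)))"

definition bp :: "nat \<Rightarrow> complex \<Rightarrow> complex" where
  "bp p s = (if p = 2 then (1/2) * (npow 8 s - npow 4 s + 2) / (npow 8 s + npow 2 s + 2)
     else (of_nat p - 1) / (2 * of_nat p))"

definition cp :: "nat \<Rightarrow> complex \<Rightarrow> complex" where
  "cp p s = (if p = 2 then (2::complex) powr (s - 1) * (npow 4 s + npow 2 s + 2)
                             / (npow 8 s + npow 2 s + 2)
     else 1 - ap p s - bp p s)"

definition oddexp_primes :: "nat \<Rightarrow> nat set" where
  "oddexp_primes m = {p \<in> prime_factors m. p \<noteq> 2 \<and> odd (multiplicity p m)}"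

definition evenexp_primes :: "nat \<Rightarrow> nat set" where
  "evenexp_primes m = {p \<in> prime_factors m. p \<noteq> 2 \<and> even (multiplicity p m)}"

definition m0 :: "nat \<Rightarrow> nat" where
  "m0 m = \<Prod>(oddexp_primes m)"

definition kappa :: "nat \<Rightarrow> complex \<Rightarrow> complex" where
  "kappa m s = (if odd m then 1 else
     (let e1 = multiplicity (2::nat) m in
       ((-1) ^ e1 / 2) * ((npow 8 s + npow 4 s) / (npow 8 s + npow 2 s + 2))
       * (1 + 2 * (1 + (-1) ^ e1) / (npow 4 s * (npow 2 s - 1)))))"

definition hm :: "nat \<Rightarrow> complex \<Rightarrow> complex" where
  "hm m s = ((-1) ^ card (oddexp_primes m) / of_nat (m0 m))
     * ((\<Prod>p\<in>evenexp_primes m. (1 - 2 / of_nat p)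
            * (1 + 2 * (of_nat p - 1) / ((of_nat p - 2) * (npow p s - 1))))
        / (\<Prod>p\<in>prime_factors m. 1 + 2 / (npow p s - 1)))
     * kappa m s"

definition euler_factor :: "complex \<Rightarrow> complex \<Rightarrow> nat \<Rightarrow> complex" where
  "euler_factor z s p = ap p s * (1 - 1 / of_nat p) powr (- z)
      + bp p s * (1 + 1 / of_nat p) powr (- z) + cp p s"

definition partial_euler :: "complex \<Rightarrow> complex \<Rightarrow> nat \<Rightarrow> complex" where
  "partial_euler z s N = (\<Prod>p\<in>{p. prime p \<and> p \<le> N}. euler_factor z s p)"

definition dirichlet_term :: "complex \<Rightarrow> complex \<Rightarrow> nat \<Rightarrow> complex" where
  "dirichlet_term z s m = dz z m / of_nat m * hm m s"

end

theory Submission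
  imports Defs "HOL-Complex_Analysis.Cauchy_Integral_Formula"
begin

(* The coefficients are multiplicative: every ingredient of h_m (the sign, m0, the products
   over even-exponent primes and over all p | m, and kappa) splits into factors attached to
   the prime powers p^e exactly dividing m, and the factor at p^e simplifies to
   a_p(s) + (-1)^e b_p(s).  Summing the local terms over e by the binomial series
   (1 -+ 1/p)^(-z) = sum_e (z)_e / e! (+-1/p)^e and using a_p + b_p + c_p = 1 gives the
   Euler factor at p.  For odd p one has a_p - b_p = O(1/p) and |a_p| + |b_p| = O(1)
   uniformly in Re s > 1/2, while a_2, b_2 are continuous there; so the local terms are
   O(2^-e (|z|)_e / e! / p^2) locally uniformly in s.  Hence the Dirichlet series converges
   absolutely and locally uniformly, its sum over the N-smooth numbers is the partial Euler
   product, and it is holomorphic. *)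

section \<open>Euler products of multiplicative functions\<close>

definition multiplicative :: "(nat \<Rightarrow> nat \<Rightarrow> 'a::comm_monoid_mult) \<Rightarrow> nat \<Rightarrow> 'a" where
  "multiplicative L m = (\<Prod>p\<in>prime_factors m. L p (multiplicity p m))"

definition smooth_numbers :: "nat set \<Rightarrow> nat set" where
  "smooth_numbers P = {m. m > 0 \<and> prime_factors m \<subseteq> P}"

lemma prime_factors_prime_power:
  assumes "prime (q::nat)" "e \<noteq> 0"
  shows "prime_factors (q ^ e) = {q}"
  using assms
  by (auto simp: in_prime_factors_iff prime_dvd_power_iff primes_dvd_imp_eq prime_gt_0_nat)

lemma multiplicative_prime_power_mult:
  assumes q: "prime (q::nat)" and m: "m > 0" "\<not> q dvd m" and L0: "L q 0 = 1"
  shows "multiplicative L (q ^ e * m) = L q e * multiplicative L m"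
proof (cases "e = 0")
  case True
  then show ?thesis using L0 by simp
next
  case False
  have qe: "q ^ e \<noteq> 0" using q by (simp add: prime_gt_0_nat)
  have q_notin: "q \<notin> prime_factors m" using m by (auto simp: in_prime_factors_iff)
  have factors: "prime_factors (q ^ e * m) = insert q (prime_factors m)"
    using prime_factors_product[OF qe, of m] m prime_factors_prime_power[OF q False] by auto
  have mult_q: "multiplicity q (q ^ e * m) = e"
    using prime_elem_multiplicity_mult_distrib[of q "q ^ e" m] q m qe
    by (simp add: not_dvd_imp_multiplicity_0)
  have mult_p: "multiplicity p (q ^ e * m) = multiplicity p m" if "p \<in> prime_factors m" for p
  proof -
    have "prime p" "p \<noteq> q" using that q_notin by (auto simp: in_prime_factors_iff)
    then show ?thesis
      using prime_elem_multiplicity_mult_distrib[of p "q ^ e" m] q m qe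
      by (simp add: multiplicity_distinct_prime_power)
  qed
  show ?thesis
    unfolding multiplicative_def factors using q_notin by (simp add: mult_q mult_p)
qed

lemma smooth_numbers_empty: "smooth_numbers {} = {1}"
proof -
  have "m = 1" if "m > 0" "prime_factors m = {}" for m :: nat
    using that prime_factorization_nat[of m] by simp
  then show ?thesis by (auto simp: smooth_numbers_def)
qed

lemma smooth_numbers_insert:
  assumes q: "prime (q::nat)" and "q \<notin> P"
  shows "bij_betw (\<lambda>(e, m). q ^ e * m) (UNIV \<times> smooth_numbers P) (smooth_numbers (insert q P))"
proof (rule bij_betwI')
  have q1: "q > 1" using q prime_gt_1_nat by blast
  have not_dvd: "\<not> q dvd m" if "m \<in> smooth_numbers P" for m
    using that \<open>q \<notin> P\<close> q by (auto simp: smooth_numbers_def in_prime_factors_iff)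
  show "(case x of (e, m) \<Rightarrow> q ^ e * m) = (case y of (e, m) \<Rightarrow> q ^ e * m) \<longleftrightarrow> x = y"
    if "x \<in> UNIV \<times> smooth_numbers P" "y \<in> UNIV \<times> smooth_numbers P" for x y
  proof -
    obtain e m e' m' where xy: "x = (e, m)" "y = (e', m')" by fastforce
    have "multiplicity q (q ^ e * m) = e" "multiplicity q (q ^ e' * m') = e'"
      using that not_dvd q1 by (auto simp: xy intro: multiplicity_decomposeI)
    then show ?thesis using q1 by (auto simp: xy)
  qed
  show "(case x of (e, m) \<Rightarrow> q ^ e * m) \<in> smooth_numbers (insert q P)"
    if x_in: "x \<in> UNIV \<times> smooth_numbers P" for x
  proof -
    obtain e m where x: "x = (e, m)" and m: "m \<in> smooth_numbers P" using x_in by auto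
    have "prime_factors (q ^ e * m) \<subseteq> insert q P"
      using m prime_factors_product[of "q ^ e" m] prime_factors_prime_power[OF q, of e] q1
      by (cases "e = 0") (auto simp: smooth_numbers_def)
    then show ?thesis using m q1 by (simp add: x smooth_numbers_def)
  qed
  show "\<exists>x\<in>UNIV \<times> smooth_numbers P. n = (case x of (e, m) \<Rightarrow> q ^ e * m)"
    if n: "n \<in> smooth_numbers (insert q P)" for n
  proof -
    obtain m where m: "n = q ^ multiplicity q n * m" "\<not> q dvd m"
      using multiplicity_decompose'[of n q] n q1 by (auto simp: smooth_numbers_def)
    have "m dvd n" by (subst m(1)) simp
    moreover have "m > 0" using m(1) n by (auto simp: smooth_numbers_def intro: gr0I)
    ultimately have "m \<in> smooth_numbers P"
      using n m dvd_prime_factors[of n m] by (auto simp: smooth_numbers_def in_prime_factors_iff)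
    then show ?thesis using m by auto
  qed
qed

lemma has_sum_multiplicative_insert:
  fixes L :: "nat \<Rightarrow> nat \<Rightarrow> 'a::{real_normed_field, banach}"
  assumes q: "prime q" "q \<notin> P" and L0: "L q 0 = 1"
    and Lq: "(L q has_sum S) UNIV" "(\<lambda>e. norm (L q e)) summable_on UNIV"
    and LP: "(multiplicative L has_sum T) (smooth_numbers P)"
      "(\<lambda>m. norm (multiplicative L m)) summable_on smooth_numbers P"
  shows "(multiplicative L has_sum S * T) (smooth_numbers (insert q P))"
    and "(\<lambda>m. norm (multiplicative L m)) summable_on smooth_numbers (insert q P)"
proof -
  note bij = smooth_numbers_insert[OF q]
  have split: "multiplicative L (q ^ e * m) = L q e * multiplicative L m" if "m \<in> smooth_numbers P" for e m
    using that q L0 by (intro multiplicative_prime_power_mult) (auto simp: smooth_numbers_def in_prime_factors_iff)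
  obtain N where N: "((\<lambda>m. norm (multiplicative L m)) has_sum N) (smooth_numbers P)"
    using LP(2) by (auto simp: summable_on_def)
  have norm_summable: "(\<lambda>(e, m). norm (L q e) * norm (multiplicative L m)) summable_on UNIV \<times> smooth_numbers P"
    by (rule summable_on_SigmaI[where g = "\<lambda>e. norm (L q e) * N"])
       (use has_sum_cmult_right[OF N] summable_on_cmult_left[OF Lq(2)] in auto)
  have "((\<lambda>(e, m). L q e * multiplicative L m) has_sum S * T) (UNIV \<times> smooth_numbers P)"
  proof (rule has_sum_SigmaI[where g = "\<lambda>e. L q e * T"])
    show "((\<lambda>(e, m). L q e * multiplicative L m) summable_on UNIV \<times> smooth_numbers P)"
      by (rule abs_summable_summable) (use norm_summable in \<open>simp add: case_prod_unfold norm_mult\<close>)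
  qed (use has_sum_cmult_right[OF LP(1)] has_sum_cmult_left[OF Lq(1)] in auto)
  then show "(multiplicative L has_sum S * T) (smooth_numbers (insert q P))"
    by (subst has_sum_reindex_bij_betw[OF bij, symmetric])
       (auto simp: split intro: has_sum_cong[THEN iffD1, rotated])
  show "(\<lambda>m. norm (multiplicative L m)) summable_on smooth_numbers (insert q P)"
    using norm_summable
    by (subst summable_on_reindex_bij_betw[OF bij, symmetric])
       (auto simp: split norm_mult intro: summable_on_cong[THEN iffD1, rotated])
qed

lemma has_sum_multiplicative_smooth_numbers:
  fixes L :: "nat \<Rightarrow> nat \<Rightarrow> 'a::{real_normed_field, banach}"
  assumes "finite P" and "\<And>p. p \<in> P \<Longrightarrow> prime p" and "\<And>p. p \<in> P \<Longrightarrow> L p 0 = 1"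
    and "\<And>p. p \<in> P \<Longrightarrow> (L p has_sum S p) UNIV"
    and "\<And>p. p \<in> P \<Longrightarrow> (\<lambda>e. norm (L p e)) summable_on UNIV"
  shows "(multiplicative L has_sum (\<Prod>p\<in>P. S p)) (smooth_numbers P)"
    and "(\<lambda>m. norm (multiplicative L m)) summable_on smooth_numbers P"
proof -
  from assms have "(multiplicative L has_sum (\<Prod>p\<in>P. S p)) (smooth_numbers P)
    \<and> (\<lambda>m. norm (multiplicative L m)) summable_on smooth_numbers P"
  proof (induction P rule: finite_induct)
    case empty
    have "(multiplicative L has_sum 1) {1}" by (rule has_sum_finiteI) (simp_all add: multiplicative_def)
    then show ?case by (auto simp: smooth_numbers_empty)
  next
    case (insert q P)
    note IH = insert.IH[OF insert.prems]
    show ?case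
      using has_sum_multiplicative_insert[where S = "S q", OF _ insert.hyps(2) _ _ _ IH[THEN conjunct1] IH[THEN conjunct2]]
        insert.prems insert.hyps by auto
  qed
  then show "(multiplicative L has_sum (\<Prod>p\<in>P. S p)) (smooth_numbers P)"
    and "(\<lambda>m. norm (multiplicative L m)) summable_on smooth_numbers P" by auto
qed

lemma smooth_numbers_primes_upto: "{1..N} \<subseteq> smooth_numbers {p. prime p \<and> p \<le> N}"
  by (auto simp: smooth_numbers_def in_prime_factors_iff) (meson dvd_imp_le le_trans less_eq_Suc_le)

lemma tendsto_has_sum_exhausting:
  fixes f :: "nat \<Rightarrow> 'a::{real_normed_algebra, banach}"
  assumes summable: "summable (\<lambda>n. norm (f (Suc n)))"
    and T: "\<And>N. {1..N} \<subseteq> T N" "\<And>N. 0 \<notin> T N"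
    and has_sum: "\<And>N. (f has_sum v N) (T N)"
  shows "v \<longlonglongrightarrow> (\<Sum>n. f (Suc n))"
proof -
  define a where "a k N = (if Suc k \<in> T N then f (Suc k) else 0)" for k N
  have "v = (\<lambda>N. \<Sum>k. a k N)"
  proof
    fix N
    have T_eq: "T N = Suc ` {k. Suc k \<in> T N}"
      using T(2)[of N] by (auto simp: image_iff) (metis not0_implies_Suc)
    have "((f \<circ> Suc) has_sum v N) {k. Suc k \<in> T N}"
      using has_sum[of N] by (subst (asm) T_eq) (simp add: has_sum_reindex)
    then have "((\<lambda>k. a k N) has_sum v N) UNIV"
      by (rule has_sum_cong_neutral[THEN iffD1, rotated -1]) (auto simp: a_def)
    then show "v N = (\<Sum>k. a k N)" by (simp add: has_sum_imp_sums sums_unique)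
  qed
  moreover have "((\<lambda>N. a k N) \<longlongrightarrow> f (Suc k)) sequentially" for k
  proof (rule tendsto_eventually)
    show "\<forall>\<^sub>F N in sequentially. a k N = f (Suc k)"
      using eventually_ge_at_top[of "Suc k"] by eventually_elim (use T(1) in \<open>force simp: a_def\<close>)
  qed
  then have "(\<lambda>N. \<Sum>k. a k N) \<longlonglongrightarrow> (\<Sum>k. f (Suc k))"
    by (intro tannerys_theorem[where M = "\<lambda>k. norm (f (Suc k))", THEN conjunct2, THEN conjunct2])
       (auto simp: a_def summable intro: always_eventually)
  ultimately show ?thesis by simp
qed

lemma euler_product_tendsto:
  fixes L :: "nat \<Rightarrow> nat \<Rightarrow> 'a::{real_normed_field, banach}"
  assumes summable: "summable (\<lambda>n. norm (multiplicative L (Suc n)))"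
    and "\<And>p. prime p \<Longrightarrow> L p 0 = 1"
    and "\<And>p. prime p \<Longrightarrow> (L p has_sum S p) UNIV"
    and "\<And>p. prime p \<Longrightarrow> (\<lambda>e. norm (L p e)) summable_on UNIV"
  shows "(\<lambda>N. \<Prod>p | prime p \<and> p \<le> N. S p) \<longlonglongrightarrow> (\<Sum>n. multiplicative L (Suc n))"
  using summable smooth_numbers_primes_upto
proof (rule tendsto_has_sum_exhausting)
  show "0 \<notin> smooth_numbers {p. prime p \<and> p \<le> N}" for N
    by (simp add: smooth_numbers_def)
  show "(multiplicative L has_sum (\<Prod>p | prime p \<and> p \<le> N. S p)) (smooth_numbers {p. prime p \<and> p \<le> N})" for N
    by (rule has_sum_multiplicative_smooth_numbers) (use assms in auto)
qed

definition square_majorant :: "real \<Rightarrow> (nat \<Rightarrow> real) \<Rightarrow> nat \<Rightarrow> nat \<Rightarrow> real" where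
  "square_majorant K \<rho> p e = (if e = 0 then 1 else K * \<rho> e / real p ^ 2)"

lemma summable_square_majorant:
  assumes "summable \<rho>"
  shows "summable (square_majorant K \<rho> p)"
proof -
  have "summable (\<lambda>e. K / real p ^ 2 * \<rho> e)" by (intro summable_mult assms)
  moreover have "\<forall>\<^sub>F e in sequentially. K / real p ^ 2 * \<rho> e = square_majorant K \<rho> p e"
    using eventually_gt_at_top[of 0] by eventually_elim (simp add: square_majorant_def)
  ultimately show ?thesis using summable_cong by fastforce
qed

lemma suminf_square_majorant_le:
  assumes "K \<ge> 0" "\<And>e. \<rho> e \<ge> 0" "summable \<rho>"
  shows "(\<Sum>e. square_majorant K \<rho> p e) \<le> 1 + K * (\<Sum>e. \<rho> e) / real p ^ 2"
proof -
  have le: "square_majorant K \<rho> p e \<le> (if e = 0 then 1 else 0) + K / real p ^ 2 * \<rho> e" for e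
    using assms by (simp add: square_majorant_def)
  have "(\<lambda>e. (if e = 0 then 1 else 0) + K / real p ^ 2 * \<rho> e) sums (1 + K / real p ^ 2 * (\<Sum>e. \<rho> e))"
    using assms(3) by (intro sums_add sums_mult sums_single[of 0 "\<lambda>_. 1::real", simplified] summable_sums)
  then have "(\<Sum>e. square_majorant K \<rho> p e) \<le> 1 + K / real p ^ 2 * (\<Sum>e. \<rho> e)"
    using suminf_le[OF le summable_square_majorant[OF assms(3)]] by (simp add: sums_iff)
  then show ?thesis by simp
qed

lemma prod_suminf_square_majorant_le:
  assumes K: "K \<ge> 0" and \<rho>: "\<And>e. \<rho> e \<ge> 0" "summable \<rho>" and "finite P"
  shows "(\<Prod>p\<in>P. \<Sum>e. square_majorant K \<rho> p e) \<le> exp (K * (\<Sum>e. \<rho> e) * (\<Sum>n. inverse (real n ^ 2)))"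
proof -
  define R where "R = K * (\<Sum>e. \<rho> e)"
  have R: "R \<ge> 0" using assms by (simp add: R_def suminf_nonneg)
  have "square_majorant K \<rho> p e \<ge> 0" for p e using K \<rho> by (simp add: square_majorant_def)
  then have "(\<Prod>p\<in>P. \<Sum>e. square_majorant K \<rho> p e) \<le> (\<Prod>p\<in>P. 1 + R / real p ^ 2)"
    using suminf_square_majorant_le[OF K \<rho>] summable_square_majorant[OF \<rho>(2)]
    by (intro prod_mono) (auto simp: R_def intro!: suminf_nonneg)
  also have "\<dots> \<le> exp (\<Sum>p\<in>P. R / real p ^ 2)"
    using R by (intro prod_le_exp_sum) auto
  also have "(\<Sum>p\<in>P. R / real p ^ 2) = R * (\<Sum>p\<in>P. inverse (real p ^ 2))"
    by (simp add: sum_distrib_left divide_inverse)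
  also have "\<dots> \<le> R * (\<Sum>n. inverse (real n ^ 2))"
    using R inverse_power_summable[of 2] \<open>finite P\<close> by (intro mult_left_mono sum_le_suminf) auto
  finally show ?thesis by (simp add: R_def)
qed

lemma summable_multiplicative_square_majorant:
  assumes K: "K \<ge> 0" and \<rho>: "\<And>e. \<rho> e \<ge> 0" "summable \<rho>"
  shows "summable (\<lambda>n. multiplicative (square_majorant K \<rho>) (Suc n))"
proof (rule summableI_nonneg_bounded)
  let ?g = "square_majorant K \<rho>"
  have g_nonneg: "?g p e \<ge> 0" for p e using assms by (simp add: square_majorant_def)
  have mult_nonneg: "multiplicative ?g m \<ge> 0" for m
    using g_nonneg by (simp add: multiplicative_def prod_nonneg)
  then show "multiplicative ?g (Suc n) \<ge> 0" for n .
  fix N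
  define P :: "nat set" where "P = {p. prime p \<and> p \<le> N}"
  have "(?g p has_sum (\<Sum>e. ?g p e)) UNIV" "(\<lambda>e. norm (?g p e)) summable_on UNIV" for p
    using summable_sums[OF summable_square_majorant[OF \<rho>(2)]] summable_square_majorant[OF \<rho>(2)] g_nonneg
    by (simp_all add: sums_nonneg_imp_has_sum summable_nonneg_imp_summable_on)
  then have "(multiplicative ?g has_sum (\<Prod>p\<in>P. \<Sum>e. ?g p e)) (smooth_numbers P)"
    by (intro has_sum_multiplicative_smooth_numbers) (auto simp: P_def square_majorant_def)
  then have "(\<Sum>m\<in>{1..N}. multiplicative ?g m) \<le> (\<Prod>p\<in>P. \<Sum>e. ?g p e)"
    using smooth_numbers_primes_upto[of N] mult_nonneg
    by (intro finite_sum_le_has_sum) (auto simp: P_def)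
  also have "\<dots> \<le> exp (K * (\<Sum>e. \<rho> e) * (\<Sum>n. inverse (real n ^ 2)))"
    by (rule prod_suminf_square_majorant_le[OF assms]) (simp add: P_def)
  finally show "(\<Sum>n<N. multiplicative ?g (Suc n)) \<le> exp (K * (\<Sum>e. \<rho> e) * (\<Sum>n. inverse (real n ^ 2)))"
    by (simp add: sum.atLeast1_atMost_eq)
qed

lemma norm_multiplicative_le:
  assumes "\<And>p. p \<in> prime_factors m \<Longrightarrow> norm (L p (multiplicity p m)) \<le> g p (multiplicity p m)"
  shows "norm (multiplicative L m :: 'a::real_normed_field) \<le> multiplicative g m"
  unfolding multiplicative_def prod_norm[symmetric] using assms by (intro prod_mono) auto

lemma npow_eq_exp: "n > 0 \<Longrightarrow> npow n s = exp (s * of_real (ln (real n)))"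
  by (simp add: npow_def powr_def Ln_of_nat)

lemma npow_power: "n > 0 \<Longrightarrow> npow (n ^ k) s = npow n s ^ k"
proof -
  assume n: "n > 0"
  have "npow (n ^ k) s = exp (of_nat k * (s * of_real (ln (real n))))"
    using n by (subst npow_eq_exp) (simp_all add: ln_realpow mult_ac)
  also have "\<dots> = npow n s ^ k"
    using n by (simp add: exp_of_nat_mult npow_eq_exp)
  finally show ?thesis .
qed

lemma norm_npow: "n > 0 \<Longrightarrow> norm (npow n s) = real n powr Re s"
  unfolding npow_def by (subst norm_powr_real_powr) auto

lemma norm_npow_gt_sqrt:
  assumes "n \<ge> 2" "Re s > 1/2"
  shows "norm (npow n s) > sqrt (real n)"
proof -
  have "real n powr Re s > real n powr (1/2)"
    using assms by (intro powr_less_mono) auto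
  then show ?thesis using assms by (simp add: norm_npow powr_half_sqrt)
qed

lemma npow_not_unit:
  assumes "n \<ge> 2" "Re s > 1/2"
  shows "npow n s \<noteq> 1" "npow n s \<noteq> -1" "npow n s \<noteq> 0"
proof -
  have "sqrt (real n) > 1" using assms by simp
  then have "norm (npow n s) > 1" using norm_npow_gt_sqrt[OF assms] by linarith
  then show "npow n s \<noteq> 1" "npow n s \<noteq> -1" "npow n s \<noteq> 0" by auto
qed

lemma cubic_nonzero_outside_disc:
  fixes u :: complex
  assumes "norm u > sqrt 2"
  shows "u ^ 3 + u + 2 \<noteq> 0"
proof
  assume "u ^ 3 + u + 2 = 0"
  moreover have "u ^ 3 + u + 2 = (u + 1) * (u ^ 2 - u + 2)"
    by (simp add: algebra_simps power2_eq_square power3_eq_cube)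
  moreover have "u + 1 \<noteq> 0"
    using assms by (auto simp: add_eq_0_iff2)
  ultimately have quadratic: "u ^ 2 - u + 2 = 0" by simp
  obtain a b where u: "u = Complex a b" by (cases u)
  from quadratic have re: "a^2 - b^2 - a + 2 = 0" and im: "(2 * a - 1) * b = 0"
    by (simp_all add: u complex_eq_iff power2_eq_square algebra_simps)
  have "b \<noteq> 0"
  proof
    assume "b = 0"
    with re have "(a - 1/2)^2 + 7/4 = 0" by (simp add: power2_eq_square algebra_simps)
    then show False using zero_le_power2[of "a - 1/2"] by linarith
  qed
  with im have a: "a = 1/2" by simp
  have "a^2 + b^2 = 2" using re by (simp add: a power2_eq_square)
  moreover have "(norm u)^2 > 2"
    using power_strict_mono[OF assms, of 2] by simp
  ultimately show False by (simp add: u cmod_power2)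
qed

section \<open>Local factorisation of h_m\<close>

definition hm_local :: "nat \<Rightarrow> nat \<Rightarrow> complex \<Rightarrow> complex" where
  "hm_local p e s =
     (if p = 2 then (-1) ^ e / 2 * ((npow 8 s + npow 4 s) / (npow 8 s + npow 2 s + 2))
                    * (1 + 2 * (1 + (-1) ^ e) / (npow 4 s * (npow 2 s - 1)))
      else if odd e then -1 / of_nat p
      else (1 - 2 / of_nat p) * (1 + 2 * (of_nat p - 1) / ((of_nat p - 2) * (npow p s - 1))))
     / (1 + 2 / (npow p s - 1))"

lemma hm_eq_prod_hm_local:
  assumes "m > 0"
  shows "hm m s = (\<Prod>p\<in>prime_factors m. hm_local p (multiplicity p m) s)"
proof -
  let ?PF = "prime_factors m" and ?O = "oddexp_primes m" and ?E = "evenexp_primes m"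
  define X where "X p = (1 - 2 / of_nat p) * (1 + 2 * (of_nat p - 1) / ((of_nat p - 2) * (npow p s - 1)))" for p
  define K where "K e = (-1) ^ e / 2 * ((npow 8 s + npow 4 s) / (npow 8 s + npow 2 s + 2))
                    * (1 + 2 * (1 + (-1) ^ e) / (npow 4 s * (npow 2 s - 1)))" for e
  have subsets: "?O \<subseteq> ?PF" "?E \<subseteq> ?PF" by (auto simp: oddexp_primes_def evenexp_primes_def)
  have sign: "(-1) ^ card ?O / of_nat (m0 m) = (\<Prod>p\<in>?PF. if p \<in> ?O then -1 / of_nat p else (1::complex))"
  proof -
    have "(\<Prod>p\<in>?PF. if p \<in> ?O then -1 / of_nat p else (1::complex)) = (\<Prod>p\<in>?O. -1 / of_nat p)"
      using prod.inter_restrict[of ?PF "\<lambda>p. -1 / (of_nat p :: complex)" ?O] subsets by (simp add: Int_absorb1)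
    also have "\<dots> = (-1) ^ card ?O / of_nat (m0 m)"
      by (simp only: prod_dividef prod_constant m0_def of_nat_prod)
    finally show ?thesis by simp
  qed
  have even: "(\<Prod>p\<in>?E. X p) = (\<Prod>p\<in>?PF. if p \<in> ?E then X p else 1)"
    using prod.inter_restrict[of ?PF X ?E] subsets by (simp add: Int_absorb1)
  have two: "kappa m s = (\<Prod>p\<in>?PF. if p = 2 then K (multiplicity p m) else 1)"
  proof (cases "even m")
    case True
    then have "2 \<in> ?PF" using assms by (auto simp: in_prime_factors_iff)
    then show ?thesis using True prod.inter_restrict[of ?PF "\<lambda>p. K (multiplicity p m)" "{2}"]
      by (simp add: kappa_def K_def Let_def)
  next
    case False
    then have "2 \<notin> ?PF" by (auto simp: in_prime_factors_iff)
    then show ?thesis using False by (simp add: kappa_def prod.neutral)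
  qed
  have "hm m s = ((-1) ^ card ?O / of_nat (m0 m)) * ((\<Prod>p\<in>?E. X p) / (\<Prod>p\<in>?PF. 1 + 2 / (npow p s - 1)))
      * kappa m s"
    by (simp add: hm_def X_def)
  also have "\<dots> = (\<Prod>p\<in>?PF. (if p \<in> ?O then -1 / of_nat p else 1)
      * ((if p \<in> ?E then X p else 1) / (1 + 2 / (npow p s - 1))) * (if p = 2 then K (multiplicity p m) else 1))"
    by (simp only: sign even two prod_dividef prod.distrib)
  also have "\<dots> = (\<Prod>p\<in>?PF. hm_local p (multiplicity p m) s)"
    by (intro prod.cong) (auto simp: hm_local_def oddexp_primes_def evenexp_primes_def X_def K_def)
  finally show ?thesis .
qed

lemma hm_local_two_identity:
  fixes u :: complex
  assumes "u \<noteq> 0" "u \<noteq> 1" "u \<noteq> -1" "u ^ 3 + u + 2 \<noteq> 0"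
  shows "(-1) ^ e / 2 * ((u ^ 3 + u ^ 2) / (u ^ 3 + u + 2)) * (1 + 2 * (1 + (-1) ^ e) / (u ^ 2 * (u - 1)))
           / (1 + 2 / (u - 1))
         = 1 / (u ^ 3 + u + 2) + 1 / 2 * (u ^ 3 - u ^ 2 + 2) / (u ^ 3 + u + 2) * (-1) ^ e"
proof -
  \<comment> \<open>Obtained rather than defined, so that \<open>field_simps\<close> treats them as atoms
     whose non-vanishing it can use.\<close>
  obtain A B N where AB: "A = u + 1" "B = u - 1" "N = u ^ 3 + u + 2" by blast
  have nonzero: "A \<noteq> 0" "B \<noteq> 0" "N \<noteq> 0"
    using assms by (auto simp: AB add_eq_0_iff2)
  have D: "1 + 2 / (u - 1) = A / B" using nonzero by (simp add: AB field_simps)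
  show ?thesis
    unfolding D unfolding AB(2,3)[symmetric] using assms(1) nonzero
    by (cases "even e") (simp_all add: field_simps, simp_all add: AB(1,2) algebra_simps eval_nat_numeral)
qed

lemma hm_local_odd_identity:
  fixes w P :: complex
  assumes "w \<noteq> 1" "w \<noteq> -1" "P \<noteq> 0" "P \<noteq> 2"
  shows "(if odd e then -1 / P else (1 - 2 / P) * (1 + 2 * (P - 1) / ((P - 2) * (w - 1))))
           / (1 + 2 / (w - 1))
         = (P - 3) / (2 * P) + 2 / (P * (w + 1)) + (P - 1) / (2 * P) * (-1) ^ e"
proof -
  obtain A B C where ABC: "A = w + 1" "B = w - 1" "C = P - 2" by blast
  have nonzero: "A \<noteq> 0" "B \<noteq> 0" "C \<noteq> 0"
    using assms by (auto simp: ABC add_eq_0_iff2)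
  have D: "1 + 2 / (w - 1) = A / B" using nonzero by (simp add: ABC field_simps)
  show ?thesis
    unfolding D unfolding ABC[symmetric] using assms(3) nonzero
    by (cases "even e") (simp_all add: field_simps, simp_all add: ABC algebra_simps)
qed

lemma cp_two_identity:
  fixes u :: complex
  assumes "u ^ 3 + u + 2 \<noteq> 0"
  shows "u / 2 * (u ^ 2 + u + 2) / (u ^ 3 + u + 2)
         = 1 - 1 / (u ^ 3 + u + 2) - 1 / 2 * (u ^ 3 - u ^ 2 + 2) / (u ^ 3 + u + 2)"
proof -
  obtain N where N: "N = u ^ 3 + u + 2" by blast
  have "N \<noteq> 0" using assms N by simp
  then show ?thesis
    unfolding N[symmetric] by (simp add: field_simps) (simp add: N algebra_simps eval_nat_numeral)
qed

lemma npow_eight_two_nonzero: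
  assumes "Re s > 1/2"
  shows "npow 8 s + npow 2 s + 2 \<noteq> 0"
proof -
  have "norm (npow 2 s) > sqrt 2" using norm_npow_gt_sqrt[of 2 s] assms by simp
  then have "npow 2 s ^ 3 + npow 2 s + 2 \<noteq> 0" by (rule cubic_nonzero_outside_disc)
  then show ?thesis using npow_power[of 2 3 s] by simp
qed

lemma hm_local_eq:
  assumes p: "prime p" and s: "Re s > 1/2"
  shows "hm_local p e s = ap p s + bp p s * (-1) ^ e"
proof (cases "p = 2")
  case True
  define u where "u = npow 2 s"
  have "npow 4 s = u ^ 2" "npow 8 s = u ^ 3"
    using npow_power[of 2 2 s] npow_power[of 2 3 s] by (simp_all add: u_def)
  moreover have "u \<noteq> 0" "u \<noteq> 1" "u \<noteq> -1" "u ^ 3 + u + 2 \<noteq> 0"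
    using npow_not_unit[of 2 s] npow_eight_two_nonzero[OF s] s \<open>npow 8 s = u ^ 3\<close>
    by (simp_all add: u_def)
  ultimately show ?thesis
    using True hm_local_two_identity[of u e] by (simp add: hm_local_def ap_def bp_def u_def)
next
  case False
  have "npow p s \<noteq> 1" "npow p s \<noteq> -1" using npow_not_unit[of p s] p s prime_ge_2_nat by auto
  moreover have "(of_nat p :: complex) \<noteq> 0" using prime_gt_0_nat[OF p] by simp
  moreover have "(of_nat p :: complex) \<noteq> 2" using False of_nat_eq_iff[of p 2, where 'a = complex] by simp
  ultimately show ?thesis
    using False hm_local_odd_identity[of "npow p s" "of_nat p" e]
    by (simp add: hm_local_def ap_def bp_def)
qed

lemma cp_eq:
  assumes "Re s > 1/2"
  shows "cp p s = 1 - ap p s - bp p s"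
proof (cases "p = 2")
  case True
  define u where "u = npow 2 s"
  have "npow 4 s = u ^ 2" "npow 8 s = u ^ 3"
    using npow_power[of 2 2 s] npow_power[of 2 3 s] by (simp_all add: u_def)
  moreover have "(2::complex) powr (s - 1) = u / 2" by (simp add: u_def npow_def powr_diff)
  ultimately show ?thesis
    using True cp_two_identity[of u] npow_eight_two_nonzero[OF assms]
    by (simp only: cp_def ap_def bp_def u_def[symmetric] if_True) simp
qed (simp add: cp_def)

lemma hm_eq_prod:
  assumes "m > 0" "Re s > 1/2"
  shows "hm m s = (\<Prod>p\<in>prime_factors m. ap p s + bp p s * (-1) ^ multiplicity p m)"
  using assms by (simp add: hm_eq_prod_hm_local hm_local_eq in_prime_factors_iff)

section \<open>The local series\<close>

definition local_term :: "complex \<Rightarrow> complex \<Rightarrow> nat \<Rightarrow> nat \<Rightarrow> complex" where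
  "local_term z s p e = (if e = 0 then 1
     else pochhammer z e / fact e / of_nat p ^ e * (ap p s + bp p s * (-1) ^ e))"

lemma dirichlet_term_eq_multiplicative:
  assumes m: "m > 0" and s: "Re s > 1/2"
  shows "dirichlet_term z s m = multiplicative (local_term z s) m"
proof -
  have "(of_nat m :: complex) = (\<Prod>p\<in>prime_factors m. of_nat p ^ multiplicity p m)"
    by (subst prime_factorization_nat[OF m]) (simp only: of_nat_prod of_nat_power)
  then have "dirichlet_term z s m = (\<Prod>p\<in>prime_factors m. pochhammer z (multiplicity p m) / fact (multiplicity p m)
      / of_nat p ^ multiplicity p m * (ap p s + bp p s * (-1) ^ multiplicity p m))"
    by (simp add: dirichlet_term_def dz_def hm_eq_prod[OF m s] prod_dividef prod.distrib)
  also have "\<dots> = multiplicative (local_term z s) m"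
    unfolding multiplicative_def local_term_def
    by (rule prod.cong[OF refl]) (use m in \<open>auto simp: prime_factors_multiplicity\<close>)
  finally show ?thesis .
qed

lemma pochhammer_binomial_sums:
  fixes x :: complex
  assumes "norm x < 1"
  shows "(\<lambda>e. pochhammer z e / fact e * x ^ e) sums (1 - x) powr (-z)"
proof -
  have "((-z) gchoose e) * (-x) ^ e = pochhammer z e / fact e * x ^ e" for e
  proof -
    have "((-z) gchoose e) * (-x) ^ e = ((-1) ^ e * (-1) ^ e) * (pochhammer z e / fact e * x ^ e)"
      by (simp add: gbinomial_pochhammer power_minus[of x] mult_ac)
    then show ?thesis by (simp add: power_mult_distrib[symmetric])
  qed
  then show ?thesis
    using gen_binomial_complex[of "-x" "-z"] assms by simp
qed

lemma local_term_sums_euler_factor: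
  assumes p: "prime p" and s: "Re s > 1/2"
  shows "local_term z s p sums euler_factor z s p"
proof -
  let ?t = "\<lambda>e. pochhammer z e / fact e / of_nat p ^ e"
  have small: "norm (1 / of_nat p :: complex) < 1" "norm (-1 / of_nat p :: complex) < 1"
    using prime_ge_2_nat[OF p] by (simp_all add: norm_divide)
  have "?t sums (1 - 1 / of_nat p) powr (-z)"
    using pochhammer_binomial_sums[OF small(1), of z] by (simp add: power_divide)
  moreover have "(\<lambda>e. ?t e * (-1) ^ e) sums (1 + 1 / of_nat p) powr (-z)"
    using pochhammer_binomial_sums[OF small(2), of z, unfolded power_divide] by (simp add: mult_ac)
  moreover have "(\<lambda>e. if e = 0 then cp p s else 0) sums cp p s"
    using sums_single[of 0 "\<lambda>_. cp p s"] by simp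
  ultimately have "(\<lambda>e. ap p s * ?t e + bp p s * (?t e * (-1) ^ e) + (if e = 0 then cp p s else 0))
      sums euler_factor z s p"
    unfolding euler_factor_def by (intro sums_add sums_mult)
  moreover have "ap p s * ?t e + bp p s * (?t e * (-1) ^ e) + (if e = 0 then cp p s else 0)
      = local_term z s p e" for e
    by (cases "e = 0") (simp_all add: local_term_def cp_eq[OF s] algebra_simps)
  ultimately show ?thesis by simp
qed

definition binomial_majorant :: "real \<Rightarrow> nat \<Rightarrow> real" where
  "binomial_majorant r e = pochhammer r e / fact e / 2 ^ e"

lemma summable_binomial_majorant: "summable (binomial_majorant r)"
proof -
  have "norm (1 / 2 :: complex) < 1" by simp
  from pochhammer_binomial_sums[OF this, of "of_real r"]
  have "summable (\<lambda>e. complex_of_real (binomial_majorant r e))"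
    by (auto simp: sums_iff binomial_majorant_def pochhammer_of_real power_divide)
  then show ?thesis by simp
qed

lemma binomial_majorant_nonneg:
  assumes "r \<ge> 0"
  shows "binomial_majorant r e \<ge> 0"
proof -
  have "pochhammer r e \<ge> 0" using assms by (induction e) (auto simp: pochhammer_Suc)
  then show ?thesis by (simp add: binomial_majorant_def)
qed

lemma norm_pochhammer_le:
  fixes z :: "'a::real_normed_field"
  shows "norm (pochhammer z e) \<le> pochhammer (norm z) e"
proof (induction e)
  case (Suc e)
  have "norm (pochhammer z (Suc e)) = norm (pochhammer z e) * norm (z + of_nat e)"
    by (simp add: pochhammer_Suc norm_mult)
  also have "\<dots> \<le> pochhammer (norm z) e * (norm z + of_nat e)"
    using norm_triangle_ineq[of z "of_nat e"] Suc.IH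
    by (intro mult_mono) (auto intro: order.trans[OF norm_ge_zero])
  finally show ?case by (simp add: pochhammer_Suc)
qed simp

lemma power_weight_le:
  fixes x C r :: real
  assumes x: "x \<ge> 2" and "e \<noteq> 0" and C: "C \<ge> 0" and r: "r \<ge> 0"
  shows "r / x ^ e * (if e = 1 then C / x else C) \<le> 4 * C * (r / 2 ^ e) / x ^ 2"
proof (cases "e = 1")
  case True
  then show ?thesis using C r x by (simp add: power2_eq_square field_simps)
next
  case False
  define k where "k = e - 2"
  have k: "e = k + 2" using \<open>e \<noteq> 0\<close> False by (simp add: k_def)
  have "r / x ^ e * C = C * r / (x ^ k * x ^ 2)"
    by (simp add: k power_add power2_eq_square mult_ac)
  also have "\<dots> \<le> C * r / (2 ^ k * x ^ 2)"
    using C r x by (intro divide_left_mono mult_right_mono mult_pos_pos power_mono) auto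
  also have "\<dots> = 4 * C * (r / 2 ^ e) / x ^ 2"
    by (simp add: k power_add)
  finally show ?thesis using False by simp
qed

lemma norm_local_term_le:
  assumes p: "prime p" and C: "C \<ge> 0"
    and sum_le: "norm (ap p s) + norm (bp p s) \<le> C" and diff_le: "norm (ap p s - bp p s) \<le> C / real p"
  shows "norm (local_term z s p e) \<le> square_majorant (4 * C) (binomial_majorant (norm z)) p e"
proof (cases "e = 0")
  case True
  then show ?thesis by (simp add: local_term_def square_majorant_def)
next
  case False
  have p2: "real p \<ge> 2" using prime_ge_2_nat[OF p] by simp
  define r where "r = pochhammer (norm z) e / fact e"
  have poch: "pochhammer (norm z) e \<ge> 0" using order.trans[OF norm_ge_zero norm_pochhammer_le[of z e]] .
  have H: "norm (ap p s + bp p s * (-1) ^ e) \<le> (if e = 1 then C / real p else C)"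
  proof (cases "e = 1")
    case False
    have "norm (ap p s + bp p s * (-1) ^ e) \<le> norm (ap p s) + norm (bp p s)"
      using norm_triangle_ineq[of "ap p s" "bp p s * (-1) ^ e"] by (simp add: norm_mult norm_power)
    then show ?thesis using sum_le False by simp
  qed (use diff_le in simp)
  have "norm (local_term z s p e) = norm (pochhammer z e) / fact e / real p ^ e * norm (ap p s + bp p s * (-1) ^ e)"
    using False by (simp add: local_term_def norm_mult norm_divide norm_power)
  also have "\<dots> \<le> r / real p ^ e * (if e = 1 then C / real p else C)"
    unfolding r_def using poch C p2
    by (intro mult_mono divide_right_mono norm_pochhammer_le H) auto
  also have "\<dots> \<le> 4 * C * (r / 2 ^ e) / real p ^ 2"
    using p2 False C poch by (intro power_weight_le) (auto simp: r_def)
  also have "\<dots> = square_majorant (4 * C) (binomial_majorant (norm z)) p e"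
    using False by (simp add: square_majorant_def binomial_majorant_def r_def)
  finally show ?thesis .
qed

section \<open>Locally uniform bounds and holomorphy\<close>

lemma npow_holomorphic: "(\<lambda>s. npow n s) holomorphic_on A"
  unfolding npow_def by (intro holomorphic_on_powr_right holomorphic_intros)

lemma ap_holomorphic:
  assumes "p \<ge> 2"
  shows "(\<lambda>s. ap p s) holomorphic_on {s. Re s > 1/2}"
proof (cases "p = 2")
  case True
  show ?thesis unfolding ap_def if_P[OF True]
    by (intro holomorphic_intros npow_holomorphic) (use npow_eight_two_nonzero in simp)
next
  case False
  have "of_nat p * (npow p s + 1) \<noteq> 0" if "s \<in> {s. Re s > 1/2}" for s
    using assms npow_not_unit[OF assms, of s] that by (auto simp: add_eq_0_iff2)
  then show ?thesis unfolding ap_def if_not_P[OF False]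
    by (intro holomorphic_intros npow_holomorphic)
qed

lemma bp_holomorphic: "(\<lambda>s. bp p s) holomorphic_on {s. Re s > 1/2}"
proof (cases "p = 2")
  case True
  show ?thesis unfolding bp_def if_P[OF True]
    by (intro holomorphic_intros npow_holomorphic) (use npow_eight_two_nonzero in simp)
qed (simp add: bp_def)

lemma odd_prime_ap_bp_bounds:
  assumes p: "prime p" "p \<noteq> 2" and s: "Re s > 1/2"
  shows "norm (ap p s) + norm (bp p s) \<le> 5" "norm (ap p s - bp p s) \<le> 5 / real p"
proof -
  have p3: "real p \<ge> 3" using prime_ge_2_nat[OF p(1)] p(2) by simp
  define w where "w = npow p s"
  have "norm w > sqrt (real p)"
    using norm_npow_gt_sqrt[of p s] p3 s by (simp add: w_def)
  moreover have "sqrt (real p) \<ge> 3 / 2" using p3 by (intro real_le_rsqrt) (simp add: power2_eq_square)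
  ultimately have w1: "norm (w + 1) \<ge> 1/2" using norm_diff_ineq[of w 1] by simp
  have "norm (2 / (of_nat p * (w + 1))) = 2 / (real p * norm (w + 1))"
    by (simp add: norm_divide norm_mult)
  also have "\<dots> \<le> 2 / (real p * (1/2))"
    using p3 w1 by (intro divide_left_mono mult_left_mono mult_pos_pos) auto
  finally have tail: "norm (2 / (of_nat p * (w + 1))) \<le> 4 / real p" by simp
  obtain \<alpha> \<beta> :: real and t :: complex
    where \<alpha>: "\<alpha> = (real p - 3) / (2 * real p)" and \<beta>: "\<beta> = (real p - 1) / (2 * real p)"
      and t: "t = 2 / (of_nat p * (w + 1))"
    by blast
  have ap: "ap p s = of_real \<alpha> + t" and bp: "bp p s = of_real \<beta>"
    using p(2) by (simp_all add: ap_def bp_def w_def \<alpha> \<beta> t)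
  have "\<bar>\<alpha>\<bar> \<le> 1/2" "\<bar>\<beta>\<bar> \<le> 1/2" "\<bar>\<alpha> - \<beta>\<bar> = 1 / real p"
    using p3 by (simp_all add: \<alpha> \<beta> abs_if field_simps)
  moreover have "ap p s - bp p s = of_real (\<alpha> - \<beta>) + t" by (simp add: ap bp)
  then have "norm (ap p s) \<le> \<bar>\<alpha>\<bar> + norm t" "norm (ap p s - bp p s) \<le> \<bar>\<alpha> - \<beta>\<bar> + norm t"
    using norm_triangle_ineq[of "of_real \<alpha>" t] norm_triangle_ineq[of "of_real (\<alpha> - \<beta>)" t]
    by (simp_all only: ap norm_of_real)
  moreover have "norm t \<le> 4 / real p" using tail by (simp add: t)
  moreover have "4 / real p \<le> 4" using p3 by (simp add: field_simps)
  ultimately show "norm (ap p s) + norm (bp p s) \<le> 5" "norm (ap p s - bp p s) \<le> 5 / real p"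
    by (auto simp: bp)
qed

lemma ap_bp_locally_bounded:
  assumes "Re s0 > 1/2"
  obtains d C where "d > 0" "C \<ge> 0"
    and "\<And>s p. s \<in> ball s0 d \<Longrightarrow> Re s > 1/2 \<Longrightarrow> prime p \<Longrightarrow>
           norm (ap p s) + norm (bp p s) \<le> C \<and> norm (ap p s - bp p s) \<le> C / real p"
proof -
  have cont: "isCont (\<lambda>s. ap 2 s) s0" "isCont (\<lambda>s. bp 2 s) s0"
    using holomorphic_on_imp_continuous_on[OF ap_holomorphic[of 2]]
      holomorphic_on_imp_continuous_on[OF bp_holomorphic[of 2]] assms
      continuous_on_eq_continuous_at[OF open_halfspace_Re_gt, of "1/2"]
    by auto
  obtain d1 where d1: "d1 > 0" "\<And>s. dist s s0 < d1 \<Longrightarrow> dist (ap 2 s) (ap 2 s0) < 1"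
    using cont(1) unfolding continuous_at_eps_delta by (meson zero_less_one)
  obtain d2 where d2: "d2 > 0" "\<And>s. dist s s0 < d2 \<Longrightarrow> dist (bp 2 s) (bp 2 s0) < 1"
    using cont(2) unfolding continuous_at_eps_delta by (meson zero_less_one)
  define M where "M = norm (ap 2 s0) + norm (bp 2 s0) + 2"
  define C where "C = max 5 (2 * M)"
  show thesis
  proof (rule that[of "min d1 d2" C])
    fix s and p :: nat
    assume s: "s \<in> ball s0 (min d1 d2)" "Re s > 1/2" and p: "prime p"
    show "norm (ap p s) + norm (bp p s) \<le> C \<and> norm (ap p s - bp p s) \<le> C / real p"
    proof (cases "p = 2")
      case True
      have "norm (ap 2 s) \<le> norm (ap 2 s0) + 1" "norm (bp 2 s) \<le> norm (bp 2 s0) + 1"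
        using d1(2)[of s] d2(2)[of s] s norm_triangle_ineq2[of "ap 2 s" "ap 2 s0"]
          norm_triangle_ineq2[of "bp 2 s" "bp 2 s0"]
        by (auto simp: dist_norm norm_minus_commute)
      moreover have "norm (ap 2 s - bp 2 s) \<le> norm (ap 2 s) + norm (bp 2 s)"
        by (rule norm_triangle_ineq4)
      ultimately show ?thesis using True by (auto simp: C_def M_def)
    next
      case False
      have "5 / real p \<le> C / real p" by (intro divide_right_mono) (auto simp: C_def)
      then show ?thesis using odd_prime_ap_bp_bounds[OF p False s(2)] by (auto simp: C_def)
    qed
  qed (use d1 d2 in \<open>auto simp: C_def\<close>)
qed

lemma norm_dirichlet_term_le:
  assumes s: "Re s > 1/2" and C: "C \<ge> 0"
    and bounds: "\<And>p. prime p \<Longrightarrow> norm (ap p s) + norm (bp p s) \<le> C \<and> norm (ap p s - bp p s) \<le> C / real p"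
  shows "norm (dirichlet_term z s (Suc n))
           \<le> multiplicative (square_majorant (4 * C) (binomial_majorant (norm z))) (Suc n)"
  unfolding dirichlet_term_eq_multiplicative[OF zero_less_Suc s]
  using C bounds by (intro norm_multiplicative_le norm_local_term_le) (auto simp: in_prime_factors_iff)

lemma summable_dirichlet_majorant:
  "C \<ge> 0 \<Longrightarrow> summable (\<lambda>n. multiplicative (square_majorant (4 * C) (binomial_majorant (norm z))) (Suc n))"
  by (intro summable_multiplicative_square_majorant) (auto intro: binomial_majorant_nonneg summable_binomial_majorant)

lemma dirichlet_term_locally_dominated:
  assumes "Re s0 > 1/2"
  shows "\<exists>d h. 0 < d \<and> summable h \<and>
    (\<forall>n. \<forall>s\<in>ball s0 d \<inter> {s. Re s > 1/2}. norm (dirichlet_term z s (Suc n)) \<le> h n)"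
proof -
  obtain d C where "d > 0" "C \<ge> 0"
    and "\<And>s p. s \<in> ball s0 d \<Longrightarrow> Re s > 1/2 \<Longrightarrow> prime p \<Longrightarrow>
           norm (ap p s) + norm (bp p s) \<le> C \<and> norm (ap p s - bp p s) \<le> C / real p"
    using ap_bp_locally_bounded[OF assms] by blast
  then show ?thesis
    using norm_dirichlet_term_le[of _ C z] summable_dirichlet_majorant[of C z] by (intro exI[of _ d]) auto
qed

lemma dirichlet_term_holomorphic:
  "(\<lambda>s. dirichlet_term z s (Suc n)) holomorphic_on {s. Re s > 1/2}"
proof -
  have "(\<lambda>s. local_term z s p e) holomorphic_on {s. Re s > 1/2}" if "prime p" for p e
    using that prime_gt_0_nat[OF that] ap_holomorphic[OF prime_ge_2_nat] bp_holomorphic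
    unfolding local_term_def by (cases "e = 0") (auto intro!: holomorphic_intros)
  then have "(\<lambda>s. multiplicative (local_term z s) (Suc n)) holomorphic_on {s. Re s > 1/2}"
    unfolding multiplicative_def by (intro holomorphic_on_prod) (auto simp: in_prime_factors_iff)
  then show ?thesis
    by (rule holomorphic_transform) (simp add: dirichlet_term_eq_multiplicative)
qed

lemma dirichlet_series_euler_product:
  assumes s: "Re s > 1/2"
  shows "summable (\<lambda>n. norm (dirichlet_term z s (Suc n)))"
    and "partial_euler z s \<longlonglongrightarrow> (\<Sum>n. dirichlet_term z s (Suc n))"
proof -
  obtain d C where "d > 0" "C \<ge> 0"
    and near_s: "\<And>s' p. s' \<in> ball s d \<Longrightarrow> Re s' > 1/2 \<Longrightarrow> prime p \<Longrightarrow>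
           norm (ap p s') + norm (bp p s') \<le> C \<and> norm (ap p s' - bp p s') \<le> C / real p"
    using ap_bp_locally_bounded[OF s] by blast
  have bounds: "\<And>p. prime p \<Longrightarrow> norm (ap p s) + norm (bp p s) \<le> C \<and> norm (ap p s - bp p s) \<le> C / real p"
    using near_s[of s] \<open>d > 0\<close> s by simp
  show summable: "summable (\<lambda>n. norm (dirichlet_term z s (Suc n)))"
    using summable_dirichlet_majorant[OF \<open>C \<ge> 0\<close>, of z]
    by (rule summable_comparison_test[rotated]) (use norm_dirichlet_term_le[OF s \<open>C \<ge> 0\<close> bounds] in auto)
  have local_summable: "summable (\<lambda>e. norm (local_term z s p e))" if "prime p" for p
    using summable_square_majorant[OF summable_binomial_majorant]
    by (rule summable_comparison_test[rotated]) (use norm_local_term_le[OF that \<open>C \<ge> 0\<close>] bounds[OF that] in auto)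
  have "(\<lambda>N. \<Prod>p | prime p \<and> p \<le> N. euler_factor z s p) \<longlonglongrightarrow> (\<Sum>n. multiplicative (local_term z s) (Suc n))"
  proof (rule euler_product_tendsto)
    show "summable (\<lambda>n. norm (multiplicative (local_term z s) (Suc n)))"
      using summable by (simp add: dirichlet_term_eq_multiplicative[OF _ s])
    fix p :: nat assume p: "prime p"
    show "local_term z s p 0 = 1" by (simp add: local_term_def)
    show "(\<lambda>e. norm (local_term z s p e)) summable_on UNIV"
      using local_summable[OF p] by (rule summable_nonneg_imp_summable_on) simp
    show "(local_term z s p has_sum euler_factor z s p) UNIV"
      using local_summable[OF p] local_term_sums_euler_factor[OF p s] by (rule norm_summable_imp_has_sum)
  qed
  then show "partial_euler z s \<longlonglongrightarrow> (\<Sum>n. dirichlet_term z s (Suc n))"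
    by (simp add: partial_euler_def[abs_def] dirichlet_term_eq_multiplicative[OF _ s])
qed

lemma dirichlet_series_holomorphic:
  "(\<lambda>s. \<Sum>n. dirichlet_term z s (Suc n)) holomorphic_on {s. Re s > 1/2}"
proof -
  let ?H = "{s. Re s > 1/2}"
  obtain g g' where g: "\<And>s. s \<in> ?H \<Longrightarrow> (\<lambda>n. dirichlet_term z s (Suc n)) sums g s \<and> (g has_field_derivative g' s) (at s)"
  proof -
    have "\<exists>g g'. \<forall>s \<in> ?H. ((\<lambda>n. dirichlet_term z s (Suc n)) sums g s) \<and>
        ((\<lambda>n. deriv (\<lambda>s. dirichlet_term z s (Suc n)) s) sums g' s) \<and> (g has_field_derivative g' s) (at s)"
    proof (rule series_and_derivative_comparison_local[OF open_halfspace_Re_gt])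
      show "((\<lambda>s. dirichlet_term z s (Suc n)) has_field_derivative deriv (\<lambda>s. dirichlet_term z s (Suc n)) s) (at s)"
        if "s \<in> ?H" for n s
        using holomorphic_derivI[OF dirichlet_term_holomorphic open_halfspace_Re_gt that] by simp
      show "\<exists>d h. 0 < d \<and> summable h \<and> (\<forall>\<^sub>F n in sequentially. \<forall>s\<in>ball s0 d \<inter> ?H. norm (dirichlet_term z s (Suc n)) \<le> h n)"
        if "s0 \<in> ?H" for s0
        using dirichlet_term_locally_dominated[of s0 z] that by (auto intro: always_eventually)
    qed
    then show thesis using that by blast
  qed
  have "g holomorphic_on ?H"
    using g by (subst holomorphic_on_open[OF open_halfspace_Re_gt]) blast
  then show ?thesis
    by (rule holomorphic_transform) (use g sums_unique in metis)
qed

theorem lemma20: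
  fixes B :: real
  assumes "B > 0"
  shows "\<exists>x0::real. \<forall>x\<ge>x0. \<forall>z::complex.
    cmod z \<le> B * ln x / (ln (ln x) * ln (ln (ln x))) \<longrightarrow>
      (\<forall>s. Re s > 1/2 \<longrightarrow>
         (\<exists>L. (\<lambda>n. dirichlet_term z s (Suc n)) sums L \<and> partial_euler z s \<longlonglongrightarrow> L))
    \<and> (\<lambda>s. \<Sum>n. dirichlet_term z s (Suc n)) holomorphic_on {s. Re s > 1/2}
    \<and> (\<lambda>s. lim (partial_euler z s)) holomorphic_on {s. Re s > 1/2}"
proof (rule exI[of _ 0], intro allI impI conjI)
  fix z :: complex and s :: complex
  assume s: "Re s > 1/2"
  show "\<exists>L. (\<lambda>n. dirichlet_term z s (Suc n)) sums L \<and> partial_euler z s \<longlonglongrightarrow> L"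
    using dirichlet_series_euler_product[OF s]
    by (auto intro: summable_sums summable_norm_cancel)
next
  fix z :: complex
  show "(\<lambda>s. \<Sum>n. dirichlet_term z s (Suc n)) holomorphic_on {s. Re s > 1/2}"
    by (rule dirichlet_series_holomorphic)
  then show "(\<lambda>s. lim (partial_euler z s)) holomorphic_on {s. Re s > 1/2}"
    by (rule holomorphic_transform) (simp add: limI[OF dirichlet_series_euler_product(2)])
qed

end
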